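(* Let $m\ge1$, let $\Omega$ be a set with $|\Omega|=2^m$, and let $D:\Omega\to[0,1]$ satisfy $\sum_{y\in\Omega}D(y)\le1$. Let $H=\sum_{y\in\Omega}D(y)\log\frac1{D(y)}$. (i) If $H\ge1$, then $$\frac{\sum_{y\in\Omega}D(y)(\log D(y))^2}{H^2}\le\Big(1+\frac{\log(m+\log m+1.1)}{m}\Big)m = m+\log(m+\log m+1.1).$$ (ii) If $H\le1$ and $m\ge2$, then $$\sum_{y\in\Omega}D(y)(\log D(y))^2\le m+\log(m+\log m+2.5).$$
   Context: All logarithms are base 2, with the convention $0\log\frac10=0$ and $0\cdot(\log 0)^2=0$. *)

theory Defs
  imports Complex_Main
begin

(* Entropy (base 2) with the convention 0 log(1/0) = 0; in Isabelle log 2 0 = 0,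
   so the convention holds automatically, but we make it explicit. *)
definition entropy2 :: "('a \<Rightarrow> real) \<Rightarrow> 'a set \<Rightarrow> real" where
  "entropy2 D \<Omega> = (\<Sum>y\<in>\<Omega>. if D y = 0 then 0 else D y * log 2 (1 / D y))"

definition logsq_moment :: "('a \<Rightarrow> real) \<Rightarrow> 'a set \<Rightarrow> real" where
  "logsq_moment D \<Omega> = (\<Sum>y\<in>\<Omega>. if D y = 0 then 0 else D y * (log 2 (D y))^2)"

end

theory Submission
  imports Defs "HOL-Analysis.Harmonic_Numbers"
begin

(* Put x = log (1 / D y) >= 0, so D y = 2 powr (-x).  Call (alpha, G) a certificate for m if G >= 0
   and x (x - alpha) <= G 2^(x - m) for all x >= 0.  Multiplying by D y and summing over the 2^m
   points gives  sum D (log D)^2 <= alpha H + G,  whence the ratio is at most alpha + G when H >= 1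
   (provided alpha + G >= 0), and the moment is at most alpha + G when H <= 1 (provided alpha >= 0).
   For m >= 4 and L = m + log m + 1.1, the choice alpha = m + log L - 1/ln 2, G = 1/ln 2 works: the
   substitution x = alpha + (1 + h)/ln 2 reduces the certificate inequality to
   (1 + h)(L - eps + h/ln 2) <= L e^h with eps = L - m - log L >= 1/4.  For m <= 3 explicit rational
   certificates are verified by bounding 2^x from below by quadratics on intervals with endpoints
   in (1/8)Z. *)

section \<open>Certificates bound the second log-moment\<close>

definition logsq_certificate :: "nat \<Rightarrow> real \<Rightarrow> real \<Rightarrow> bool" where
  "logsq_certificate m \<alpha> G \<longleftrightarrow> 0 \<le> G \<and> (\<forall>x\<ge>0. x * (x - \<alpha>) \<le> G * 2 powr (x - real m))"

lemma logsq_certificateI: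
  assumes "0 \<le> G" and "\<And>x. 0 \<le> x \<Longrightarrow> x * (x - \<alpha>) \<le> G * 2 powr (x - real m)"
  shows "logsq_certificate m \<alpha> G"
  using assms unfolding logsq_certificate_def by blast

lemma logsq_term_le_certificate:
  fixes d :: real
  assumes cert: "logsq_certificate m \<alpha> G" and d: "0 \<le> d" "d \<le> 1"
  shows "(if d = 0 then 0 else d * (log 2 d)\<^sup>2)
           \<le> \<alpha> * (if d = 0 then 0 else d * log 2 (1 / d)) + G / 2 ^ m"
proof (cases "d = 0")
  case True
  then show ?thesis using cert by (simp add: logsq_certificate_def)
next
  case False
  define x where "x = log 2 (1 / d)"
  have "0 < d" using d False by simp
  have "0 \<le> x" using \<open>0 < d\<close> d(2) by (simp add: x_def)
  have "2 powr (x - real m) = 1 / d / 2 ^ m"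
    using \<open>0 < d\<close> by (simp add: x_def powr_diff powr_realpow)
  then have "d * (x * (x - \<alpha>)) \<le> d * (G * (1 / d / 2 ^ m))"
    using cert \<open>0 \<le> x\<close> \<open>0 < d\<close> by (intro mult_left_mono) (auto simp: logsq_certificate_def)
  also have "\<dots> = G / 2 ^ m" using \<open>0 < d\<close> by simp
  finally show ?thesis
    using False \<open>0 < d\<close> by (simp add: x_def log_divide algebra_simps power2_eq_square)
qed

lemma logsq_moment_le_certificate:
  assumes cert: "logsq_certificate m \<alpha> G"
    and "finite \<Omega>" "card \<Omega> = 2 ^ m" and D: "\<And>y. y \<in> \<Omega> \<Longrightarrow> 0 \<le> D y \<and> D y \<le> 1"
  shows "logsq_moment D \<Omega> \<le> \<alpha> * entropy2 D \<Omega> + G"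
proof -
  have "logsq_moment D \<Omega>
      \<le> (\<Sum>y\<in>\<Omega>. \<alpha> * (if D y = 0 then 0 else D y * log 2 (1 / D y)) + G / 2 ^ m)"
    unfolding logsq_moment_def
    by (intro sum_mono logsq_term_le_certificate[OF cert]) (use D in auto)
  also have "\<dots> = \<alpha> * entropy2 D \<Omega> + G"
    using assms(3) by (simp add: entropy2_def sum.distrib sum_distrib_left)
  finally show ?thesis .
qed

lemma logsq_moment_div_entropy_le_certificate:
  assumes cert: "logsq_certificate m \<alpha> G" and "0 \<le> \<alpha> + G"
    and "finite \<Omega>" "card \<Omega> = 2 ^ m" "\<And>y. y \<in> \<Omega> \<Longrightarrow> 0 \<le> D y \<and> D y \<le> 1"
    and H: "1 \<le> entropy2 D \<Omega>"
  shows "logsq_moment D \<Omega> / (entropy2 D \<Omega>)\<^sup>2 \<le> \<alpha> + G"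
proof -
  define H where "H = entropy2 D \<Omega>"
  have "0 \<le> G" using cert by (simp add: logsq_certificate_def)
  have "(\<alpha> + G) * H\<^sup>2 - (\<alpha> * H + G) = (H - 1) * ((\<alpha> + G) * H + G)"
    by (simp add: algebra_simps power2_eq_square)
  moreover have "(H - 1) * ((\<alpha> + G) * H + G) \<ge> 0"
    using H \<open>0 \<le> \<alpha> + G\<close> \<open>0 \<le> G\<close> by (simp add: H_def)
  moreover have "logsq_moment D \<Omega> \<le> \<alpha> * H + G"
    unfolding H_def by (rule logsq_moment_le_certificate[OF cert]) (use assms in auto)
  ultimately have "logsq_moment D \<Omega> \<le> (\<alpha> + G) * H\<^sup>2" by linarith
  then show ?thesis using H by (simp add: H_def pos_divide_le_eq)
qed

lemma logsq_moment_le_certificate_of_entropy_le_one: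
  assumes cert: "logsq_certificate m \<alpha> G" and "0 \<le> \<alpha>"
    and "finite \<Omega>" "card \<Omega> = 2 ^ m" "\<And>y. y \<in> \<Omega> \<Longrightarrow> 0 \<le> D y \<and> D y \<le> 1"
    and "entropy2 D \<Omega> \<le> 1"
  shows "logsq_moment D \<Omega> \<le> \<alpha> + G"
proof -
  have "\<alpha> * entropy2 D \<Omega> \<le> \<alpha>"
    using mult_left_mono[OF assms(6) assms(2)] by simp
  moreover have "logsq_moment D \<Omega> \<le> \<alpha> * entropy2 D \<Omega> + G"
    by (rule logsq_moment_le_certificate[OF cert]) (use assms in auto)
  ultimately show ?thesis by linarith
qed

lemma log2_le_of_power_le:
  fixes x :: real
  assumes "0 < x" "x ^ n \<le> 2 ^ p" "0 < n"
  shows "log 2 x \<le> real p / real n"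
proof -
  have "real n * log 2 x = log 2 (x ^ n)" using assms(1) by (simp add: log_nat_power)
  also have "\<dots> \<le> log 2 (2 ^ p)" using assms(1,2) by (subst log_le_cancel_iff) auto
  also have "\<dots> = real p" by simp
  finally show ?thesis using assms(3) by (simp add: field_simps)
qed

lemma log2_ge_of_power_ge:
  fixes x :: real
  assumes "0 < x" "2 ^ p \<le> x ^ n" "0 < n"
  shows "real p / real n \<le> log 2 x"
proof -
  have "real p = log 2 (2 ^ p)" by simp
  also have "\<dots> \<le> log 2 (x ^ n)" using assms(1,2) by (subst log_le_cancel_iff) auto
  also have "\<dots> = real n * log 2 x" using assms(1) by (simp add: log_nat_power)
  finally show ?thesis using assms(3) by (simp add: field_simps)
qed

lemma square_le_two_power: "4 \<le> n \<Longrightarrow> n\<^sup>2 \<le> (2::nat) ^ n"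
proof (induction n rule: dec_induct)
  case base
  then show ?case by simp
next
  case (step n)
  have "4 * n \<le> n * n" using step(1) by simp
  have "(Suc n)\<^sup>2 = n\<^sup>2 + 2 * n + 1" by (simp add: power2_eq_square)
  also have "\<dots> \<le> 2 * n\<^sup>2"
    using step(1) \<open>4 * n \<le> n * n\<close> unfolding power2_eq_square by linarith
  also have "\<dots> \<le> 2 * 2 ^ n" using step(3) by simp
  finally show ?case by simp
qed

lemma two_powr_ge_quadratic:
  fixes t :: real
  assumes "0 \<le> t"
  shows "1 + 2/3 * t + 2/9 * t\<^sup>2 \<le> 2 powr t"
proof -
  have "1 + 2/3 * t + 2/9 * t\<^sup>2 \<le> exp (2/3 * t)"
    using exp_lower_Taylor_quadratic[of "2/3 * t"] assms by (simp add: power2_eq_square)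
  also have "\<dots> \<le> exp (t * ln 2)"
    using mult_left_mono[OF ln2_ge_two_thirds assms] by (simp add: mult.commute)
  also have "\<dots> = 2 powr t" by (simp add: powr_def)
  finally show ?thesis .
qed

lemma quadratic_nonneg_on_interval:
  fixes c0 c1 c2 t w :: real
  assumes "0 \<le> t" "t \<le> w" "0 \<le> c0 + min c1 0 * w + min c2 0 * w\<^sup>2"
  shows "0 \<le> c0 + c1 * t + c2 * t\<^sup>2"
proof -
  have "min c1 0 * w \<le> c1 * t"
    using assms(1,2) by (cases "0 \<le> c1") (auto simp: min_def mult_left_mono_neg)
  moreover have "min c2 0 * w\<^sup>2 \<le> c2 * t\<^sup>2"
    using assms(1,2) power_mono[of t w 2]
    by (cases "0 \<le> c2") (auto simp: min_def mult_left_mono_neg)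
  ultimately show ?thesis using assms(3) by linarith
qed

lemma quadratic_nonneg:
  fixes c0 c1 c2 t :: real
  assumes "0 < c2" "c1\<^sup>2 \<le> 4 * c0 * c2"
  shows "0 \<le> c0 + c1 * t + c2 * t\<^sup>2"
proof -
  have "4 * c2 * (c0 + c1 * t + c2 * t\<^sup>2) = (2 * c2 * t + c1)\<^sup>2 + (4 * c0 * c2 - c1\<^sup>2)"
    by (simp add: algebra_simps power2_eq_square)
  also have "\<dots> \<ge> 0" using assms(2) by simp
  finally show ?thesis using assms(1) by (simp add: zero_le_mult_iff)
qed

lemma two_powr_ge_grid_quadratic:
  fixes G K x :: real and m p :: nat
  assumes "0 \<le> G" "0 < K" "(K * 2 ^ m) ^ 8 \<le> 2 ^ p" "real p / 8 \<le> x"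
  shows "G * K * (1 + 2/3 * (x - real p / 8) + 2/9 * (x - real p / 8)\<^sup>2) \<le> G * 2 powr (x - real m)"
proof -
  define a where "a = real p / 8"
  \<comment> \<open>the eighth power certifies the rational K as a lower bound for 2 powr (a - m)\<close>
  have "log 2 (K * 2 ^ m) \<le> a"
    using log2_le_of_power_le[of "K * 2 ^ m" 8 p] assms(2,3) by (simp add: a_def)
  then have "K * 2 ^ m \<le> 2 powr a"
    using assms(2) by (simp add: log_le_iff)
  then have "K \<le> 2 powr (a - real m)"
    by (simp add: powr_diff powr_realpow field_simps)
  then have "K * (1 + 2/3 * (x - a) + 2/9 * (x - a)\<^sup>2) \<le> 2 powr (a - real m) * 2 powr (x - a)"
    using two_powr_ge_quadratic[of "x - a"] assms(2,4) by (intro mult_mono) (auto simp: a_def)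
  also have "\<dots> = 2 powr (x - real m)" by (simp flip: powr_add)
  finally show ?thesis
    using assms(1) unfolding a_def by (simp add: mult.assoc mult_left_mono)
qed

lemma certificate_bound_on_interval:
  fixes \<alpha> G K b x :: real and m p :: nat
  assumes "0 \<le> G" "0 < K" "(K * 2 ^ m) ^ 8 \<le> 2 ^ p" "real p / 8 \<le> x" "x \<le> b"
    and "0 \<le> (G * K - real p / 8 * (real p / 8 - \<alpha>))
             + min (2/3 * G * K - (2 * (real p / 8) - \<alpha>)) 0 * (b - real p / 8)
             + min (2/9 * G * K - 1) 0 * (b - real p / 8)\<^sup>2"
  shows "x * (x - \<alpha>) \<le> G * 2 powr (x - real m)"
proof -
  define a t where "a = real p / 8" and "t = x - a"
  have "0 \<le> (G * K - a * (a - \<alpha>)) + (2/3 * G * K - (2 * a - \<alpha>)) * t + (2/9 * G * K - 1) * t\<^sup>2"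
    by (rule quadratic_nonneg_on_interval[where w = "b - a"]) (use assms in \<open>auto simp: a_def t_def\<close>)
  moreover have "G * K * (1 + 2/3 * t + 2/9 * t\<^sup>2) - x * (x - \<alpha>)
      = (G * K - a * (a - \<alpha>)) + (2/3 * G * K - (2 * a - \<alpha>)) * t + (2/9 * G * K - 1) * t\<^sup>2"
    by (simp add: t_def algebra_simps power2_eq_square)
  ultimately show ?thesis
    using two_powr_ge_grid_quadratic[OF assms(1-4)] by (simp add: a_def t_def)
qed

lemma certificate_bound_on_ray:
  fixes \<alpha> G K x :: real and m p :: nat
  assumes "0 \<le> G" "0 < K" "(K * 2 ^ m) ^ 8 \<le> 2 ^ p" "real p / 8 \<le> x"
    and "0 < 2/9 * G * K - 1"
    and "(2/3 * G * K - (2 * (real p / 8) - \<alpha>))\<^sup>2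
           \<le> 4 * (G * K - real p / 8 * (real p / 8 - \<alpha>)) * (2/9 * G * K - 1)"
  shows "x * (x - \<alpha>) \<le> G * 2 powr (x - real m)"
proof -
  define a t where "a = real p / 8" and "t = x - a"
  have "0 \<le> (G * K - a * (a - \<alpha>)) + (2/3 * G * K - (2 * a - \<alpha>)) * t + (2/9 * G * K - 1) * t\<^sup>2"
    by (rule quadratic_nonneg) (use assms in \<open>simp_all add: a_def\<close>)
  moreover have "G * K * (1 + 2/3 * t + 2/9 * t\<^sup>2) - x * (x - \<alpha>)
      = (G * K - a * (a - \<alpha>)) + (2/3 * G * K - (2 * a - \<alpha>)) * t + (2/9 * G * K - 1) * t\<^sup>2"
    by (simp add: t_def algebra_simps power2_eq_square)
  ultimately show ?thesis
    using two_powr_ge_grid_quadratic[OF assms(1-4)] by (simp add: a_def t_def)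
qed

section \<open>Certificates for small and large m\<close>

lemma logsq_certificate_one: "logsq_certificate 1 (-2) (81/20)"
proof (rule logsq_certificateI)
  fix x :: real
  assume "0 \<le> x"
  then consider "x \<le> 11/8" | "11/8 \<le> x" "x \<le> 14/8" | "14/8 \<le> x" "x \<le> 16/8"
    | "16/8 \<le> x" "x \<le> 17/8" | "17/8 \<le> x"
    by linarith
  then show "x * (x - -2) \<le> 81/20 * 2 powr (x - real 1)"
  proof cases
    case 1
    show ?thesis by (rule certificate_bound_on_interval[where p = 0 and K = "1/2" and b = "11/8"])
      (use 1 \<open>0 \<le> x\<close> in \<open>simp_all add: min_def power_divide power2_eq_square\<close>)
  next
    case 2
    show ?thesis by (rule certificate_bound_on_interval[where p = 11 and K = "162/125" and b = "14/8"])
      (use 2 in \<open>simp_all add: min_def power_divide power2_eq_square\<close>)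
  next
    case 3
    show ?thesis by (rule certificate_bound_on_interval[where p = 14 and K = "1681/1000" and b = "16/8"])
      (use 3 in \<open>simp_all add: min_def power_divide power2_eq_square\<close>)
  next
    case 4
    show ?thesis by (rule certificate_bound_on_interval[where p = 16 and K = 2 and b = "17/8"])
      (use 4 in \<open>simp_all add: min_def power_divide power2_eq_square\<close>)
  next
    case 5
    show ?thesis by (rule certificate_bound_on_ray[where p = 17 and K = "2181/1000"])
      (use 5 in \<open>simp_all add: power_divide power2_eq_square\<close>)
  qed
qed simp

lemma logsq_certificate_two: "logsq_certificate 2 (7/4) (227/100)"
proof (rule logsq_certificateI)
  fix x :: real
  assume "0 \<le> x"
  then consider "x \<le> 6/8" | "6/8 \<le> x" "x \<le> 17/8" | "17/8 \<le> x" "x \<le> 26/8" | "26/8 \<le> x" "x \<le> 29/8" | "29/8 \<le> x" "x \<le> 30/8" | "30/8 \<le> x" "x \<le> 31/8" | "31/8 \<le> x"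
    by linarith
  then show "x * (x - 7/4) \<le> 227/100 * 2 powr (x - real 2)"
  proof cases
    case 1
    show ?thesis by (rule certificate_bound_on_interval[where p = 0 and K = "1/4" and b = "6/8"])
      (use 1 \<open>0 \<le> x\<close> in \<open>simp_all add: min_def power_divide power2_eq_square\<close>)
  next
    case 2
    show ?thesis by (rule certificate_bound_on_interval[where p = 6 and K = "21/50" and b = "17/8"])
      (use 2 in \<open>simp_all add: min_def power_divide power2_eq_square\<close>)
  next
    case 3
    show ?thesis by (rule certificate_bound_on_interval[where p = 17 and K = "109/100" and b = "26/8"])
      (use 3 in \<open>simp_all add: min_def power_divide power2_eq_square\<close>)
  next
    case 4
    show ?thesis by (rule certificate_bound_on_interval[where p = 26 and K = "1189/500" and b = "29/8"])
      (use 4 in \<open>simp_all add: min_def power_divide power2_eq_square\<close>)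
  next
    case 5
    show ?thesis by (rule certificate_bound_on_interval[where p = 29 and K = "771/250" and b = "30/8"])
      (use 5 in \<open>simp_all add: min_def power_divide power2_eq_square\<close>)
  next
    case 6
    show ?thesis by (rule certificate_bound_on_interval[where p = 30 and K = "3363/1000" and b = "31/8"])
      (use 6 in \<open>simp_all add: min_def power_divide power2_eq_square\<close>)
  next
    case 7
    show ?thesis by (rule certificate_bound_on_ray[where p = 31 and K = "917/250"])
      (use 7 in \<open>simp_all add: power_divide power2_eq_square\<close>)
  qed
qed simp

lemma logsq_certificate_three: "logsq_certificate 3 (7/2) 2"
proof (rule logsq_certificateI)
  fix x :: real
  assume "0 \<le> x"
  then consider "x \<le> 4/8" | "4/8 \<le> x" "x \<le> 15/8" | "15/8 \<le> x" "x \<le> 32/8" | "32/8 \<le> x" "x \<le> 40/8" | "40/8 \<le> x"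
    by linarith
  then show "x * (x - 7/2) \<le> 2 * 2 powr (x - real 3)"
  proof cases
    case 1
    show ?thesis by (rule certificate_bound_on_interval[where p = 0 and K = "1/8" and b = "4/8"])
      (use 1 \<open>0 \<le> x\<close> in \<open>simp_all add: min_def power_divide power2_eq_square\<close>)
  next
    case 2
    show ?thesis by (rule certificate_bound_on_interval[where p = 4 and K = "22/125" and b = "15/8"])
      (use 2 in \<open>simp_all add: min_def power_divide power2_eq_square\<close>)
  next
    case 3
    show ?thesis by (rule certificate_bound_on_interval[where p = 15 and K = "229/500" and b = "32/8"])
      (use 3 in \<open>simp_all add: min_def power_divide power2_eq_square\<close>)
  next
    case 4
    show ?thesis by (rule certificate_bound_on_interval[where p = 32 and K = "2" and b = "40/8"])
      (use 4 in \<open>simp_all add: min_def power_divide power2_eq_square\<close>)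
  next
    case 5
    show ?thesis by (rule certificate_bound_on_ray[where p = 40 and K = "4"])
      (use 5 in \<open>simp_all add: power_divide power2_eq_square\<close>)
  qed
qed simp

lemma affine_mul_le_mul_exp:
  fixes L \<epsilon> u h :: real
  assumes L: "71/10 \<le> L" and \<epsilon>: "1/4 \<le> \<epsilon>" and u: "0 < u" "u \<le> 3/2" and h: "-1 \<le> h"
  shows "(1 + h) * (L - \<epsilon> + h * u) \<le> L * exp h"
proof (cases "0 \<le> h")
  case True
  have "u * (h * (1 + h)) \<le> 3/2 * (h * (1 + h))"
    using u True by (intro mult_right_mono) auto
  moreover have "71/10 * h\<^sup>2 \<le> L * h\<^sup>2"
    using L by (intro mult_right_mono) auto
  \<comment> \<open>what remains is 41/20 h^2 - 5/4 h + 1/4 >= 0, a quadratic with negative discriminant\<close>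
  moreover have "0 \<le> (h - 25/82)\<^sup>2" by simp
  moreover have "0 \<le> (\<epsilon> - 1/4) * (1 + h)" using \<epsilon> True by simp
  ultimately have "(1 + h) * (L - \<epsilon> + h * u) \<le> L * (1 + h + h\<^sup>2 / 2)"
    by (simp add: algebra_simps power2_eq_square)
  also have "\<dots> \<le> L * exp h"
    using exp_lower_Taylor_quadratic[OF True] L by (intro mult_left_mono) auto
  finally show ?thesis .
next
  case False
  have "0 \<le> (1 + h) * (\<epsilon> - h * u)"
    using h \<epsilon> False u mult_nonpos_nonneg[of h u] by (intro mult_nonneg_nonneg) auto
  then have "(1 + h) * (L - \<epsilon> + h * u) \<le> L * (1 + h)"
    by (simp add: algebra_simps)
  also have "\<dots> \<le> L * exp h"
    using exp_ge_add_one_self[of h] L by (intro mult_left_mono) auto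
  finally show ?thesis .
qed

lemma logsq_certificate_of_level:
  fixes L :: real and m :: nat
  assumes L: "71/10 \<le> L" and level: "real m + log 2 L + 1/4 \<le> L"
  shows "logsq_certificate m (real m + log 2 L - 1 / ln 2) (1 / ln 2)"
proof (rule logsq_certificateI)
  define u \<alpha> where "u = 1 / ln (2::real)" and "\<alpha> = real m + log 2 L - u"
  have u: "0 < u" "u \<le> 3/2" "ln 2 * u = 1"
    using ln2_ge_two_thirds by (auto simp: u_def field_simps)
  fix x :: real
  assume "0 \<le> x"
  have "x * (x - \<alpha>) \<le> u * 2 powr (x - real m)"
  proof (cases "x \<le> \<alpha>")
    case True
    then have "x * (x - \<alpha>) \<le> 0"
      using \<open>0 \<le> x\<close> by (simp add: mult_nonneg_nonpos)
    also have "0 \<le> u * 2 powr (x - real m)" using u by simp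
    finally show ?thesis .
  next
    case False
    define h where "h = ln 2 * (x - \<alpha>) - 1"
    have "x - \<alpha> = (1 + h) * u" using u by (simp add: h_def algebra_simps)
    have "(x - real m) * ln 2 = h + ln L"
      using u(3) L by (simp add: h_def \<alpha>_def log_def algebra_simps)
    then have "2 powr (x - real m) = L * exp h"
      using L by (simp add: powr_def exp_add)
    have "x * (x - \<alpha>) = u * ((1 + h) * (L - (L - real m - log 2 L) + h * u))"
      using \<open>x - \<alpha> = (1 + h) * u\<close> by (simp add: \<alpha>_def algebra_simps)
    also have "\<dots> \<le> u * (L * exp h)"
      using affine_mul_le_mul_exp[OF L _ u(1,2), of "L - real m - log 2 L" h] level u False
      by (intro mult_left_mono) (auto simp: h_def)
    finally show ?thesis using \<open>2 powr (x - real m) = L * exp h\<close> by (simp add: mult.commute)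
  qed
  then show "x * (x - (real m + log 2 L - 1 / ln 2)) \<le> 1 / ln 2 * 2 powr (x - real m)"
    by (simp add: \<alpha>_def u_def)
qed simp

lemma level_bounds_of_four_le:
  fixes m :: nat
  defines "L \<equiv> real m + log 2 (real m) + 1.1"
  assumes "4 \<le> m"
  shows "71/10 \<le> L" and "real m + log 2 L + 1/4 \<le> L"
proof -
  have "2 \<le> log 2 (real m)"
    using assms(2) le_log_iff[of 2 "real m" 2] by simp
  then show "71/10 \<le> L" using assms(2) by (simp add: L_def)
  have "log 2 (real (m\<^sup>2)) \<le> log 2 (real (2 ^ m))"
    using square_le_two_power[OF assms(2)] assms(2) by (subst log_le_cancel_iff) (auto simp del: of_nat_power)
  then have "log 2 (real m) \<le> real m / 2"
    using assms(2) by (simp add: log_nat_power)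
  then have "L \<le> 1.8 * real m" using assms(2) by (simp add: L_def)
  have "log 2 1.8 \<le> real (17::nat) / real (20::nat)"
    by (rule log2_le_of_power_le) (simp_all add: power_divide)
  have "log 2 L \<le> log 2 (1.8 * real m)"
    using \<open>L \<le> 1.8 * real m\<close> \<open>71/10 \<le> L\<close> by (subst log_le_cancel_iff) auto
  also have "\<dots> = log 2 1.8 + log 2 (real m)" using assms(2) by (subst log_mult) auto
  finally show "real m + log 2 L + 1/4 \<le> L"
    using \<open>log 2 1.8 \<le> real (17::nat) / real (20::nat)\<close> by (simp add: L_def)
qed

lemma logsq_certificate_exists:
  fixes m :: nat
  assumes "1 \<le> m"
  shows "\<exists>\<alpha> G. logsq_certificate m \<alpha> G \<and> 0 \<le> \<alpha> + G
           \<and> \<alpha> + G \<le> real m + log 2 (real m + log 2 (real m) + 1.1) \<and> (2 \<le> m \<longrightarrow> 0 \<le> \<alpha>)"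
proof -
  consider "m = 1" | "m = 2" | "m = 3" | "4 \<le> m" using assms by linarith
  then show ?thesis
  proof cases
    case 1
    have "real (21::nat) / real (20::nat) \<le> log 2 2.1"
      by (rule log2_ge_of_power_ge) (simp_all add: power_divide)
    with 1 logsq_certificate_one show ?thesis by force
  next
    case 2
    have "real (101::nat) / real (50::nat) \<le> log 2 4.1"
      by (rule log2_ge_of_power_ge) (simp_all add: power_divide)
    with 2 logsq_certificate_two show ?thesis by force
  next
    case 3
    have "real (79::nat) / real (50::nat) \<le> log 2 3"
      by (rule log2_ge_of_power_ge) simp_all
    have "real (5::nat) / real (2::nat) \<le> log 2 5.68"
      by (rule log2_ge_of_power_ge) (simp_all add: power_divide)
    also have "\<dots> \<le> log 2 (3 + log 2 3 + 1.1)"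
      using \<open>real 79 / real 50 \<le> log 2 3\<close> by (subst log_le_cancel_iff) auto
    finally have "7/2 + 2 \<le> real m + log 2 (real m + log 2 (real m) + 1.1)"
      using 3 by simp
    with 3 logsq_certificate_three show ?thesis by force
  next
    case 4
    define L where "L = real m + log 2 (real m) + 1.1"
    have L: "71/10 \<le> L" "real m + log 2 L + 1/4 \<le> L"
      using level_bounds_of_four_le[OF 4] by (simp_all add: L_def)
    define \<alpha> where "\<alpha> = real m + log 2 L - 1 / ln 2"
    have cert: "logsq_certificate m \<alpha> (1 / ln 2)"
      unfolding \<alpha>_def by (rule logsq_certificate_of_level[OF L])
    have "0 \<le> log 2 L" using L(1) by simp
    moreover have "1 / ln (2::real) \<le> 3/2" using ln2_ge_two_thirds by (simp add: field_simps)
    ultimately have "0 \<le> \<alpha>" using 4 by (simp add: \<alpha>_def)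
    have "\<alpha> + 1 / ln 2 = real m + log 2 L" by (simp add: \<alpha>_def)
    show ?thesis
      by (rule exI[of _ \<alpha>], rule exI[of _ "1 / ln 2"])
        (use cert \<open>0 \<le> \<alpha>\<close> \<open>0 \<le> log 2 L\<close> \<open>\<alpha> + 1 / ln 2 = _\<close> in \<open>simp add: L_def\<close>)
  qed
qed

theorem mainTheorem2:
  fixes \<Omega> :: "'a set" and D :: "'a \<Rightarrow> real" and m :: nat
  assumes "m \<ge> 1"
    and "finite \<Omega>" and "card \<Omega> = 2 ^ m"
    and "\<And>y. y \<in> \<Omega> \<Longrightarrow> 0 \<le> D y \<and> D y \<le> 1"
    and "(\<Sum>y\<in>\<Omega>. D y) \<le> 1"
  shows "(entropy2 D \<Omega> \<ge> 1 \<longrightarrow>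
           logsq_moment D \<Omega> / (entropy2 D \<Omega>)^2
             \<le> (1 + log 2 (real m + log 2 (real m) + 1.1) / real m) * real m)
       \<and> (entropy2 D \<Omega> \<le> 1 \<and> m \<ge> 2 \<longrightarrow>
           logsq_moment D \<Omega> \<le> real m + log 2 (real m + log 2 (real m) + 2.5))"
proof -
  have "0 \<le> log 2 (real m)" using assms(1) by simp
  then have "log 2 (real m + log 2 (real m) + 1.1) \<le> log 2 (real m + log 2 (real m) + 2.5)"
    by (subst log_le_cancel_iff) auto
  obtain \<alpha> G where cert: "logsq_certificate m \<alpha> G" and "0 \<le> \<alpha> + G"
    and bound: "\<alpha> + G \<le> real m + log 2 (real m + log 2 (real m) + 1.1)"
    and "2 \<le> m \<longrightarrow> 0 \<le> \<alpha>"
    using logsq_certificate_exists[OF assms(1)] by blast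
  have "1 \<le> entropy2 D \<Omega> \<Longrightarrow> logsq_moment D \<Omega> / (entropy2 D \<Omega>)\<^sup>2 \<le> \<alpha> + G"
    by (rule logsq_moment_div_entropy_le_certificate[OF cert \<open>0 \<le> \<alpha> + G\<close>]) (use assms in auto)
  moreover have "(1 + log 2 (real m + log 2 (real m) + 1.1) / real m) * real m
      = real m + log 2 (real m + log 2 (real m) + 1.1)"
    using assms(1) by (simp add: field_simps)
  moreover have "entropy2 D \<Omega> \<le> 1 \<Longrightarrow> 2 \<le> m \<Longrightarrow> logsq_moment D \<Omega> \<le> \<alpha> + G"
    by (rule logsq_moment_le_certificate_of_entropy_le_one[OF cert]) (use assms \<open>2 \<le> m \<longrightarrow> 0 \<le> \<alpha>\<close> in auto)
  ultimately show ?thesis using bound \<open>log 2 (_ + 1.1) \<le> _\<close> by auto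
qed

end
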